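(* Let $k$ be a field, $S=k[x_1,\dots,x_n]$, and let $\Delta$ be a connected simplicial graph on $[n]$ of genus $0$ (a tree). Let $M$ be an indecomposable square-free $S$-module (not necessarily Cohen--Macaulay) with support on $\Delta$, locally of rank $1$, of multi-degree $(0,0,\dots,0)$. Then $M$ is isomorphic to a module for which, after identifying $M_{\{v\}}=k$ for every vertex $v$ and $M_e=k$ for every edge $e$, each map $\varphi_{ve}:M_{\{v\}}\to M_e$ equals $1$ (the identity) if $v\in e$ (and is $0$ otherwise).
   Context: $S$ is $\mathbf{Z}^n$-graded. A finitely generated $\mathbf{Z}^n$-graded $S$-module $M$ is square-free if $M_{\mathbf{a}}=0$ for $\mathbf{a}\notin\mathbf{N}^n$ and multiplication by $x_i$, $M_{\mathbf{a}}\to M_{\mathbf{a}+\mathbf{e}_i}$, is bijective whenever $\mathbf{a}\in\mathbf{N}^n$ and $a_i>0$. For $F\subseteq[n]$, $M_F$ is the component of $M$ in the degree given by the indicator vector of $F$, and for $F\subseteq G$, $\varphi_{FG}:M_F\to M_G$ is multiplication by $\prod_{i\in G\setminus F}x_i$. A simplicial graph on $[n]$ is a $1$-dimensional simplicial complex $\Delta$ with vertex set $[n]$; $I_\Delta$ is generated by $\prod_{i\in\sigma}x_i$ for $\sigma\notin\Delta$. $M$ has support on $\Delta$ if its annihilator is $I_\Delta$. $M$ is locally of rank $1$ if $\dim_k M_F=1$ for every edge $F$. The multi-degree is $\mathbf{d}$ with $d_i=\dim_k M_{\{i\}}-1$. The genus is $\dim_k\widetilde H_1(\Delta;k)$. 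*)

theory Defs
  imports Complex_Main "HOL-Library.Function_Algebras"
begin

definition edges :: "nat set set \<Rightarrow> nat set set" where
  "edges \<Delta> = {F \<in> \<Delta>. card F = 2}"

definition simplicial_graph :: "nat \<Rightarrow> nat set set \<Rightarrow> bool" where
  "simplicial_graph n \<Delta> \<longleftrightarrow>
     (\<forall>F\<in>\<Delta>. F \<subseteq> {1..n}) \<and>
     (\<forall>v\<in>{1..n}. {v} \<in> \<Delta>) \<and>
     (\<forall>F\<in>\<Delta>. \<forall>G. G \<subseteq> F \<longrightarrow> G \<in> \<Delta>) \<and>
     (\<forall>F\<in>\<Delta>. card F \<le> 2) \<and>
     (\<exists>F\<in>\<Delta>. card F = 2)"

definition edge_rel :: "nat set set \<Rightarrow> (nat \<times> nat) set" where
  "edge_rel \<Delta> = {(u, v). {u, v} \<in> edges \<Delta>}"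

definition connected_graph :: "nat \<Rightarrow> nat set set \<Rightarrow> bool" where
  "connected_graph n \<Delta> \<longleftrightarrow> (\<forall>u\<in>{1..n}. \<forall>v\<in>{1..n}. (u, v) \<in> (edge_rel \<Delta>)\<^sup>*)"

text \<open>Simplicial 1-chains with coefficients in k (functions on the edges) and the
  boundary of the oriented edge [i,j] (i<j) being [j]-[i].  Since \<Delta> has no 2-faces,
  the reduced homology H~_1(\<Delta>;k) is the kernel of the boundary map C_1 \<rightarrow> C_0.\<close>
definition bsign :: "nat \<Rightarrow> nat set \<Rightarrow> 'k::field" where
  "bsign v e = (if v = Max e then 1 else - 1)"

definition cycles :: "'k::field itself \<Rightarrow> nat \<Rightarrow> nat set set \<Rightarrow> (nat set \<Rightarrow> 'k) set" where
  "cycles _ n \<Delta> = {c. (\<forall>e. e \<notin> edges \<Delta> \<longrightarrow> c e = 0) \<and>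
      (\<forall>v\<in>{1..n}. (\<Sum>e\<in>{e \<in> edges \<Delta>. v \<in> e}. bsign v e * c e) = 0)}"

definition genus :: "'k::field itself \<Rightarrow> nat \<Rightarrow> nat set set \<Rightarrow> nat" where
  "genus K n \<Delta> = vector_space.dim (\<lambda>(r::'k) (c :: nat set \<Rightarrow> 'k) e. r * c e) (cycles K n \<Delta>)"

definition degs :: "nat \<Rightarrow> (nat \<Rightarrow> int) set" where
  "degs n = {a. \<forall>i. i \<notin> {1..n} \<longrightarrow> a i = 0}"

definition ind :: "nat set \<Rightarrow> nat \<Rightarrow> int" where
  "ind F = (\<lambda>i. if i \<in> F then 1 else 0)"

text \<open>A Z^n-graded S-module is given by its homogeneous components M a (subspaces of an
  ambient k-vector space) and the multiplication maps x_i : M a \<rightarrow> M (a + e_i), which are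
  k-linear and commute; the module is the direct sum of the components.\<close>
definition graded_module ::
  "('k::field \<Rightarrow> 'v::ab_group_add \<Rightarrow> 'v) \<Rightarrow> nat \<Rightarrow> ((nat \<Rightarrow> int) \<Rightarrow> 'v set)
     \<Rightarrow> (nat \<Rightarrow> (nat \<Rightarrow> int) \<Rightarrow> 'v \<Rightarrow> 'v) \<Rightarrow> bool" where
  "graded_module scale n M mult \<longleftrightarrow>
     vector_space scale \<and>
     (\<forall>a\<in>degs n. module.subspace scale (M a)) \<and>
     (\<forall>a\<in>degs n. \<forall>i\<in>{1..n}.
        (\<forall>x\<in>M a. mult i a x \<in> M (a + ind {i})) \<and>
        (\<forall>x\<in>M a. \<forall>y\<in>M a. mult i a (x + y) = mult i a x + mult i a y) \<and>
        (\<forall>x\<in>M a. \<forall>r. mult i a (scale r x) = scale r (mult i a x))) \<and>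
     (\<forall>a\<in>degs n. \<forall>i\<in>{1..n}. \<forall>j\<in>{1..n}. \<forall>x\<in>M a.
        mult i (a + ind {j}) (mult j a x) = mult j (a + ind {i}) (mult i a x))"

fun xpow :: "(nat \<Rightarrow> (nat \<Rightarrow> int) \<Rightarrow> 'v \<Rightarrow> 'v) \<Rightarrow> nat \<Rightarrow> nat \<Rightarrow> (nat \<Rightarrow> int) \<Rightarrow> 'v \<Rightarrow> 'v" where
  "xpow mult i 0 a x = x"
| "xpow mult i (Suc k) a x = mult i (\<lambda>j. a j + int k * ind {i} j) (xpow mult i k a x)"

fun monl :: "(nat \<Rightarrow> (nat \<Rightarrow> int) \<Rightarrow> 'v \<Rightarrow> 'v) \<Rightarrow> nat list \<Rightarrow> (nat \<Rightarrow> nat) \<Rightarrow> (nat \<Rightarrow> int) \<Rightarrow> 'v \<Rightarrow> 'v" where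
  "monl mult [] b a x = x"
| "monl mult (i # is) b a x = monl mult is b (\<lambda>j. a j + int (b i) * ind {i} j) (xpow mult i (b i) a x)"

definition mon :: "(nat \<Rightarrow> (nat \<Rightarrow> int) \<Rightarrow> 'v \<Rightarrow> 'v) \<Rightarrow> nat \<Rightarrow> (nat \<Rightarrow> nat) \<Rightarrow> (nat \<Rightarrow> int) \<Rightarrow> 'v \<Rightarrow> 'v" where
  "mon mult n b a x = monl mult [1..<Suc n] b a x"

definition finitely_generated ::
  "('k::field \<Rightarrow> 'v::ab_group_add \<Rightarrow> 'v) \<Rightarrow> nat \<Rightarrow> ((nat \<Rightarrow> int) \<Rightarrow> 'v set)
     \<Rightarrow> (nat \<Rightarrow> (nat \<Rightarrow> int) \<Rightarrow> 'v \<Rightarrow> 'v) \<Rightarrow> bool" where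
  "finitely_generated scale n M mult \<longleftrightarrow>
     (\<exists>G. finite G \<and> (\<forall>(d, g)\<in>G. d \<in> degs n \<and> g \<in> M d) \<and>
        (\<forall>a\<in>degs n. M a \<subseteq> module.span scale
            {mon mult n (\<lambda>i. nat (a i - d i)) d g | d g. (d, g) \<in> G \<and> d \<le> a}))"

definition square_free ::
  "('k::field \<Rightarrow> 'v::ab_group_add \<Rightarrow> 'v) \<Rightarrow> nat \<Rightarrow> ((nat \<Rightarrow> int) \<Rightarrow> 'v set)
     \<Rightarrow> (nat \<Rightarrow> (nat \<Rightarrow> int) \<Rightarrow> 'v \<Rightarrow> 'v) \<Rightarrow> bool" where
  "square_free scale n M mult \<longleftrightarrow>
     graded_module scale n M mult \<and> finitely_generated scale n M mult \<and>
     (\<forall>a\<in>degs n. (\<exists>i\<in>{1..n}. a i < 0) \<longrightarrow> M a = {0}) \<and>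
     (\<forall>a\<in>degs n. (\<forall>i. 0 \<le> a i) \<longrightarrow> (\<forall>i\<in>{1..n}. 0 < a i \<longrightarrow>
        bij_betw (mult i a) (M a) (M (a + ind {i}))))"

text \<open>Annihilator equals I_\<Delta>.  The annihilator of a Z^n-graded module is a monomial
  ideal, as is I_\<Delta>; x^b \<in> I_\<Delta> iff supp b is not a face.\<close>
definition support_on ::
  "('k::field \<Rightarrow> 'v::ab_group_add \<Rightarrow> 'v) \<Rightarrow> nat \<Rightarrow> ((nat \<Rightarrow> int) \<Rightarrow> 'v set)
     \<Rightarrow> (nat \<Rightarrow> (nat \<Rightarrow> int) \<Rightarrow> 'v \<Rightarrow> 'v) \<Rightarrow> nat set set \<Rightarrow> bool" where
  "support_on scale n M mult \<Delta> \<longleftrightarrow>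
     (\<forall>b :: nat \<Rightarrow> nat. (\<forall>i. i \<notin> {1..n} \<longrightarrow> b i = 0) \<longrightarrow>
        ((\<forall>a\<in>degs n. \<forall>x\<in>M a. mon mult n b a x = 0) \<longleftrightarrow> {i \<in> {1..n}. 0 < b i} \<notin> \<Delta>))"

definition graded_submodule ::
  "('k::field \<Rightarrow> 'v::ab_group_add \<Rightarrow> 'v) \<Rightarrow> nat \<Rightarrow> ((nat \<Rightarrow> int) \<Rightarrow> 'v set)
     \<Rightarrow> (nat \<Rightarrow> (nat \<Rightarrow> int) \<Rightarrow> 'v \<Rightarrow> 'v) \<Rightarrow> ((nat \<Rightarrow> int) \<Rightarrow> 'v set) \<Rightarrow> bool" where
  "graded_submodule scale n M mult N \<longleftrightarrow>
     (\<forall>a\<in>degs n. module.subspace scale (N a) \<and> N a \<subseteq> M a) \<and>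
     (\<forall>a\<in>degs n. \<forall>i\<in>{1..n}. \<forall>x\<in>N a. mult i a x \<in> N (a + ind {i}))"

definition indecomposable ::
  "('k::field \<Rightarrow> 'v::ab_group_add \<Rightarrow> 'v) \<Rightarrow> nat \<Rightarrow> ((nat \<Rightarrow> int) \<Rightarrow> 'v set)
     \<Rightarrow> (nat \<Rightarrow> (nat \<Rightarrow> int) \<Rightarrow> 'v \<Rightarrow> 'v) \<Rightarrow> bool" where
  "indecomposable scale n M mult \<longleftrightarrow>
     (\<exists>a\<in>degs n. M a \<noteq> {0}) \<and>
     \<not> (\<exists>N1 N2. graded_submodule scale n M mult N1 \<and> graded_submodule scale n M mult N2 \<and>
          (\<exists>a\<in>degs n. N1 a \<noteq> {0}) \<and> (\<exists>a\<in>degs n. N2 a \<noteq> {0}) \<and>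
          (\<forall>a\<in>degs n. N1 a \<inter> N2 a = {0} \<and> M a = {x + y | x y. x \<in> N1 a \<and> y \<in> N2 a}))"

text \<open>M_F = M (ind F); \<phi>_FG = multiplication by the product of x_i, i \<in> G - F.\<close>
definition phi :: "(nat \<Rightarrow> (nat \<Rightarrow> int) \<Rightarrow> 'v \<Rightarrow> 'v) \<Rightarrow> nat \<Rightarrow> nat set \<Rightarrow> nat set \<Rightarrow> 'v \<Rightarrow> 'v" where
  "phi mult n F G x = mon mult n (\<lambda>i. if i \<in> G - F then 1 else 0) (ind F) x"

end

theory Submission
  imports Defs
begin

text \<open>
  Genus 0 makes the graph a forest: every nonempty set of edges has a leaf edge, and deleting an
  edge \<open>{v, w}\<close> separates \<open>v\<close> from \<open>w\<close>.  Suppose \<open>\<phi>\<^sub>v\<^sub>e = 0\<close> for \<open>e = {v, w}\<close>, and call a face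
  reached if it is joined to \<open>e\<close> by steps between a vertex \<open>u\<close> and an edge \<open>g \<ni> u\<close> with
  \<open>\<phi>\<^sub>u\<^sub>g \<noteq> 0\<close>.  The reached faces are vertices and edges, \<open>{v}\<close> is not among them by the
  separation, and \<open>x\<^sub>u\<close> annihilates \<open>M\<^sub>\<emptyset>\<close> for every reached vertex \<open>u\<close>.  In a square-free module,
  multiplication by \<open>x\<^sub>i\<close> vanishes in every degree as soon as it vanishes in the square-free degree
  with the same support, and components whose support is not a face are zero.  Hence the
  components supported on reached faces and those supported elsewhere are complementary graded
  submodules, both nonzero, contradicting indecomposability.  So every \<open>\<phi>\<^sub>v\<^sub>e\<close> is an isomorphism
  of one-dimensional spaces, and vertex generators compatible along all edges are chosen by
  removing leaves one at a time.
\<close>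

lemma vector_space_pointwise: "vector_space (\<lambda>(r::'k::field) (c :: 'a \<Rightarrow> 'k) e. r * c e)"
  by unfold_locales (auto simp: fun_eq_iff algebra_simps)

lemma sum_fun_apply: "(\<Sum>x\<in>S. (f x :: 'a \<Rightarrow> 'b::comm_monoid_add)) y = (\<Sum>x\<in>S. f x y)"
  by (induction S rule: infinite_finite_induct) auto

lemma bij_betw_nonzero:
  assumes "bij_betw f V W" "0 \<in> V" "f 0 = 0" "x \<in> V" "x \<noteq> 0"
  shows "f x \<noteq> 0"
  using assms by (metis bij_betw_imp_inj_on inj_onD)

context vector_space
begin

lemma dim_eq_0_imp_subset_zero:
  assumes "V \<subseteq> span W" and "finite W" and "dim V = 0"
  shows "V \<subseteq> {0}"
proof -
  obtain B where B: "B \<subseteq> V" "independent B" "V \<subseteq> span B" "card B = dim V"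
    using basis_exists by blast
  have "finite B"
    using independent_span_bound[OF assms(2) B(2)] B(1) assms(1) by blast
  with B assms(3) show ?thesis by simp
qed

lemma dim_1_generator:
  assumes "subspace V" and "dim V = 1"
  obtains b where "b \<in> V" "b \<noteq> 0" "V = range (\<lambda>r. scale r b)"
proof -
  obtain B where B: "B \<subseteq> V" "independent B" "V \<subseteq> span B" "card B = dim V"
    using basis_exists by blast
  then obtain b where "B = {b}" using assms(2) by (auto simp: card_Suc_eq)
  with B assms(1) show thesis
    by (intro that) (auto simp: span_singleton subspace_scale dependent_zero)
qed

lemma bij_betw_if_dim_1:
  assumes V: "subspace V" "dim V = 1" and W: "subspace W" "dim W = 1"
    and maps: "f ` V \<subseteq> W" and homogeneous: "\<And>r x. x \<in> V \<Longrightarrow> f (scale r x) = scale r (f x)"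
    and nonzero: "\<exists>x\<in>V. f x \<noteq> 0"
  shows "bij_betw f V W"
proof -
  obtain b where b: "b \<in> V" "V = range (\<lambda>r. scale r b)"
    using dim_1_generator[OF V] by blast
  obtain b' where b': "W = range (\<lambda>r. scale r b')"
    using dim_1_generator[OF W] by blast
  have fb: "f b \<noteq> 0"
    using nonzero b homogeneous by auto
  obtain s where s: "f b = scale s b'" using maps b b' by blast
  with fb have "s \<noteq> 0" by auto
  show ?thesis
  proof (rule bij_betw_imageI)
    show "inj_on f V"
      using b homogeneous fb by (auto simp: inj_on_def)
    have "scale t b' = f (scale (t / s) b)" for t
      using homogeneous[OF b(1)] s \<open>s \<noteq> 0\<close> by simp
    then show "f ` V = W"
      using maps b b' by auto
  qed
qed
end

section \<open>Graphs of genus zero\<close>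

lemma finite_edges: "simplicial_graph n \<Delta> \<Longrightarrow> finite (edges \<Delta>)"
  by (rule finite_subset[of _ "Pow {1..n}"]) (auto simp: simplicial_graph_def edges_def)

lemma edges_subset: "simplicial_graph n \<Delta> \<Longrightarrow> e \<in> edges \<Delta> \<Longrightarrow> e \<subseteq> {1..n}"
  by (auto simp: simplicial_graph_def edges_def)

lemma singleton_not_edge: "{u} \<notin> edges \<Delta>"
  by (simp add: edges_def)

lemma face_insert_cases:
  assumes "simplicial_graph n \<Delta>" and "insert i F \<in> \<Delta>" and "i \<notin> F" and "finite F"
  obtains "F = {}" | u where "F = {u}" "{u, i} \<in> edges \<Delta>"
proof -
  have "card (insert i F) \<le> 2" using assms(1,2) by (simp add: simplicial_graph_def)
  then have "card F \<le> 1" using assms(3,4) by simp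
  then have "F = {} \<or> (\<exists>u. F = {u})"
    using assms(4) by (metis card_0_eq card_1_singletonE le_neq_implies_less less_one)
  then show thesis
    using that assms(2,3) by (auto simp: edges_def insert_commute)
qed

lemma edge_other_endpoint:
  assumes "e \<in> edges \<Delta>" and "l \<in> e"
  obtains p where "p \<noteq> l" "e = {l, p}"
  using assms by (auto simp: edges_def card_2_iff doubleton_eq_iff)

lemma edge_ordered:
  assumes "e \<in> edges \<Delta>"
  obtains p q where "p < q" "e = {p, q}"
proof -
  obtain x y where "x \<noteq> y" "e = {x, y}" using assms by (auto simp: edges_def card_2_iff)
  then show thesis using that by (metis insert_commute linorder_neqE_nat)
qed

definition edge_boundary :: "nat set \<Rightarrow> nat \<Rightarrow> 'k::field" where
  "edge_boundary e v = (if v \<in> e then bsign v e else 0)"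

lemma bsign_nonzero [simp]: "(bsign v e :: 'k::field) \<noteq> 0"
  by (simp add: bsign_def)

lemma inj_edge_boundary: "inj (edge_boundary :: nat set \<Rightarrow> nat \<Rightarrow> 'k::field)"
proof
  fix e f :: "nat set" assume eq: "(edge_boundary e :: nat \<Rightarrow> 'k) = edge_boundary f"
  have "v \<in> e \<longleftrightarrow> v \<in> f" for v
    using fun_cong[OF eq, of v] by (auto simp: edge_boundary_def split: if_splits)
  then show "e = f" by blast
qed

lemma genus_0_cycle_eq_0:
  assumes sg: "simplicial_graph n \<Delta>" and g0: "genus TYPE('k::field) n \<Delta> = 0"
    and c: "c \<in> cycles TYPE('k) n \<Delta>"
  shows "c = 0"
proof -
  interpret V: vector_space "\<lambda>(r::'k) (c :: nat set \<Rightarrow> 'k) e. r * c e"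
    by (rule vector_space_pointwise)
  define \<delta> where "\<delta> e = (\<lambda>x. if x = e then (1::'k) else 0)" for e :: "nat set"
  have fin: "finite (edges \<Delta>)" using finite_edges[OF sg] .
  have "cycles TYPE('k) n \<Delta> \<subseteq> V.span (\<delta> ` edges \<Delta>)"
  proof
    fix d assume "d \<in> cycles TYPE('k) n \<Delta>"
    then have d0: "\<forall>e. e \<notin> edges \<Delta> \<longrightarrow> d e = 0" by (simp add: cycles_def)
    have "d = (\<Sum>e\<in>edges \<Delta>. (\<lambda>x. d e * \<delta> e x))"
    proof
      fix x
      have "(\<Sum>e\<in>edges \<Delta>. (\<lambda>x. d e * \<delta> e x)) x = (\<Sum>e\<in>edges \<Delta>. if x = e then d e else 0)"
        unfolding sum_fun_apply by (rule sum.cong) (auto simp: \<delta>_def)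
      also have "\<dots> = d x" using fin d0 by auto
      finally show "d x = (\<Sum>e\<in>edges \<Delta>. (\<lambda>x. d e * \<delta> e x)) x" by simp
    qed
    also have "\<dots> \<in> V.span (\<delta> ` edges \<Delta>)"
      by (rule V.span_sum, rule V.span_scale, rule V.span_base) simp
    finally show "d \<in> V.span (\<delta> ` edges \<Delta>)" .
  qed
  then have "cycles TYPE('k) n \<Delta> \<subseteq> {0}"
    using V.dim_eq_0_imp_subset_zero fin g0 by (simp add: genus_def)
  with c show ?thesis by blast
qed

lemma genus_0_independent_boundaries:
  assumes sg: "simplicial_graph n \<Delta>" and g0: "genus TYPE('k::field) n \<Delta> = 0"
    and E: "E \<subseteq> edges \<Delta>"
  shows "module.independent (\<lambda>(r::'k) (c :: nat \<Rightarrow> 'k) x. r * c x) (edge_boundary ` E)"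
proof
  interpret W: vector_space "\<lambda>(r::'k) (c :: nat \<Rightarrow> 'k) x. r * c x"
    by (rule vector_space_pointwise)
  assume dep: "W.dependent (edge_boundary ` E)"
  have "finite E" using finite_subset[OF E finite_edges[OF sg]] .
  then obtain u :: "(nat \<Rightarrow> 'k) \<Rightarrow> 'k" where u: "\<exists>\<beta>\<in>edge_boundary ` E. u \<beta> \<noteq> 0"
    "(\<Sum>\<beta>\<in>edge_boundary ` E. (\<lambda>x. u \<beta> * \<beta> x)) = 0"
    using dep unfolding W.dependent_finite[OF finite_imageI[OF \<open>finite E\<close>]]
    by (elim exE conjE) (rule that)
  define c where "c h = (if h \<in> E then u (edge_boundary h) else (0::'k))" for h
  have inj: "inj_on (edge_boundary :: nat set \<Rightarrow> nat \<Rightarrow> 'k) E"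
    using inj_edge_boundary by (rule inj_on_subset) simp
  have "c \<in> cycles TYPE('k) n \<Delta>"
    unfolding cycles_def
  proof (intro CollectI conjI allI impI ballI)
    fix e assume "e \<notin> edges \<Delta>" then show "c e = 0" using E by (auto simp: c_def)
  next
    fix v assume v: "v \<in> {1..n}"
    have "(\<Sum>e\<in>{e \<in> edges \<Delta>. v \<in> e}. bsign v e * c e) = (\<Sum>e\<in>edges \<Delta>. c e * edge_boundary e v)"
      by (simp add: sum.inter_filter[OF finite_edges[OF sg]] edge_boundary_def mult.commute if_distrib
          cong: if_cong)
    also have "\<dots> = (\<Sum>e\<in>E. u (edge_boundary e) * edge_boundary e v)"
      using E finite_edges[OF sg] by (intro sum.mono_neutral_cong_right) (auto simp: c_def)
    also have "\<dots> = (\<Sum>\<beta>\<in>edge_boundary ` E. (\<lambda>x. u \<beta> * \<beta> x)) v"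
      by (simp add: sum_fun_apply sum.reindex[OF inj])
    also have "\<dots> = 0" using u(2) by simp
    finally show "(\<Sum>e\<in>{e \<in> edges \<Delta>. v \<in> e}. bsign v e * c e) = 0" .
  qed
  moreover have "c \<noteq> 0"
  proof
    assume "c = 0"
    obtain h where "h \<in> E" "u (edge_boundary h) \<noteq> 0" using u(1) by blast
    then show False using fun_cong[OF \<open>c = 0\<close>, of h] by (simp add: c_def)
  qed
  ultimately show False using genus_0_cycle_eq_0[OF sg g0] by blast
qed

lemma card_vertices_le_card_edges_if_no_leaf:
  assumes fin: "finite E" and card2: "\<And>h. h \<in> E \<Longrightarrow> card h = 2"
    and no_leaf: "\<And>f l. f \<in> E \<Longrightarrow> l \<in> f \<Longrightarrow> \<exists>h\<in>E. h \<noteq> f \<and> l \<in> h"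
  shows "card (\<Union>E) \<le> card E"
proof -
  have finV: "finite (\<Union>E)" using fin card2 by (metis finite_Union card.infinite zero_neq_numeral)
  have "2 * card (\<Union>E) = (\<Sum>u\<in>\<Union>E. 2)" by simp
  also have "\<dots> \<le> (\<Sum>u\<in>\<Union>E. card {h\<in>E. u \<in> h})"
  proof (rule sum_mono)
    fix u assume "u \<in> \<Union>E"
    then obtain f where f: "f \<in> E" "u \<in> f" by blast
    then obtain h where "h \<in> E" "h \<noteq> f" "u \<in> h" using no_leaf by blast
    then have "card {f, h} \<le> card {h\<in>E. u \<in> h}"
      using f fin by (intro card_mono) auto
    then show "2 \<le> card {h\<in>E. u \<in> h}" using \<open>h \<noteq> f\<close> by simp
  qed
  also have "\<dots> = (\<Sum>h\<in>E. card {u\<in>\<Union>E. u \<in> h})"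
    using sum.swap_restrict[OF finV fin, of "\<lambda>_ _. 1::nat" "\<lambda>u h. u \<in> h"] by simp
  also have "\<dots> = (\<Sum>h\<in>E. 2)"
  proof (rule sum.cong[OF refl])
    fix h assume "h \<in> E"
    then have "{u\<in>\<Union>E. u \<in> h} = h" by blast
    then show "card {u\<in>\<Union>E. u \<in> h} = 2" using card2 \<open>h \<in> E\<close> by simp
  qed
  finally show ?thesis by simp
qed

lemma genus_0_card_edges_less_card_vertices:
  assumes sg: "simplicial_graph n \<Delta>" and g0: "genus TYPE('k::field) n \<Delta> = 0"
    and E: "E \<subseteq> edges \<Delta>" and "E \<noteq> {}"
  shows "card E < card (\<Union>E)"
proof -
  have fin: "finite (\<Union>E)"
    using finite_subset[of "\<Union>E" "{1..n}"] E edges_subset[OF sg] by auto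
  obtain f0 where f0: "f0 \<in> E" using \<open>E \<noteq> {}\<close> by blast
  then have "card f0 = 2" using E by (auto simp: edges_def)
  then obtain u0 where "u0 \<in> f0" by (auto simp: card_2_iff)
  with f0 have u0: "u0 \<in> \<Union>E" by blast
  interpret W: vector_space "\<lambda>(r::'k) (c :: nat \<Rightarrow> 'k) x. r * c x"
    by (rule vector_space_pointwise)
  define \<delta> where "\<delta> u = (\<lambda>x. if x = u then (1::'k) else 0)" for u :: nat
  define Ws where "Ws = (\<lambda>u. \<delta> u - \<delta> u0) ` (\<Union>E - {u0})"
  have \<delta>_span: "\<delta> x - \<delta> u0 \<in> W.span Ws" if "x \<in> \<Union>E" for x
    using that W.span_base W.span_zero by (cases "x = u0") (auto simp: Ws_def)
  have "edge_boundary ` E \<subseteq> W.span Ws"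
  proof
    fix \<beta> :: "nat \<Rightarrow> 'k" assume "\<beta> \<in> edge_boundary ` E"
    then obtain h where h: "h \<in> E" "\<beta> = edge_boundary h" by blast
    then obtain p q where pq: "p < q" "h = {p, q}" using E edge_ordered by blast
    then have "edge_boundary h = (\<delta> q - \<delta> u0) - (\<delta> p - \<delta> u0)"
      by (auto simp: fun_eq_iff edge_boundary_def bsign_def \<delta>_def)
    also have "\<dots> \<in> W.span Ws" using h pq by (intro W.span_diff \<delta>_span) auto
    finally show "\<beta> \<in> W.span Ws" using h by simp
  qed
  then have "card (edge_boundary ` E :: (nat \<Rightarrow> 'k) set) \<le> card Ws"
    using W.independent_span_bound[OF _ genus_0_independent_boundaries[OF sg g0 E]] fin
    by (simp add: Ws_def)
  moreover have "card (edge_boundary ` E :: (nat \<Rightarrow> 'k) set) = card E"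
    by (rule card_image[OF inj_on_subset[OF inj_edge_boundary subset_UNIV]])
  moreover have "card Ws \<le> card (\<Union>E - {u0})"
    unfolding Ws_def using fin by (intro card_image_le) simp
  moreover have "card (\<Union>E - {u0}) < card (\<Union>E)"
    using fin u0 by (rule card_Diff1_less)
  ultimately show ?thesis by simp
qed

lemma genus_0_leaf_edge:
  assumes sg: "simplicial_graph n \<Delta>" and g0: "genus TYPE('k::field) n \<Delta> = 0"
    and E: "E \<subseteq> edges \<Delta>" and "E \<noteq> {}"
  obtains f l where "f \<in> E" "l \<in> f" "\<And>h. h \<in> E \<Longrightarrow> l \<in> h \<Longrightarrow> h = f"
proof -
  have "\<exists>f\<in>E. \<exists>l\<in>f. \<forall>h\<in>E. l \<in> h \<longrightarrow> h = f"
  proof (rule ccontr)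
    assume "\<not> ?thesis"
    then have no_leaf: "\<exists>h\<in>E. h \<noteq> f \<and> l \<in> h" if "f \<in> E" "l \<in> f" for f l
      using that by blast
    have "finite E" using finite_subset[OF E finite_edges[OF sg]] .
    moreover have "card h = 2" if "h \<in> E" for h using that E by (auto simp: edges_def)
    ultimately have "card (\<Union>E) \<le> card E"
      using no_leaf by (rule card_vertices_le_card_edges_if_no_leaf)
    then show False using genus_0_card_edges_less_card_vertices[OF assms] by simp
  qed
  then show thesis using that by blast
qed

lemma separation_extends_to_leaf_edge:
  assumes A: "v \<in> A" "w \<notin> A" "\<forall>g\<in>E. g \<noteq> {v, w} \<longrightarrow> g \<subseteq> A \<or> g \<inter> A = {}"
    and leaf: "l \<notin> \<Union>E" "l \<noteq> v" "l \<noteq> w"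
  shows "\<exists>A'. v \<in> A' \<and> w \<notin> A' \<and> (\<forall>g\<in>insert {l, p} E. g \<noteq> {v, w} \<longrightarrow> g \<subseteq> A' \<or> g \<inter> A' = {})"
proof -
  define A' where "A' = (if p \<in> A then insert l A else A - {l})"
  have "g \<subseteq> A' \<or> g \<inter> A' = {}" if "g \<in> E" "g \<noteq> {v, w}" for g
  proof -
    have "l \<notin> g" using leaf(1) that(1) by blast
    moreover have "g \<subseteq> A \<or> g \<inter> A = {}" using A(3) that by blast
    ultimately show ?thesis unfolding A'_def by auto
  qed
  moreover have "{l, p} \<subseteq> A' \<or> {l, p} \<inter> A' = {}" by (auto simp: A'_def)
  moreover have "v \<in> A'" "w \<notin> A'" using A(1,2) leaf(2,3) by (auto simp: A'_def)
  ultimately show ?thesis by blast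
qed

lemma genus_0_edge_separates:
  assumes sg: "simplicial_graph n \<Delta>" and g0: "genus TYPE('k::field) n \<Delta> = 0"
    and E: "E \<subseteq> edges \<Delta>" and e: "{v, w} \<in> E" and "v \<noteq> w"
  obtains A where "v \<in> A" "w \<notin> A" "\<And>g. g \<in> E \<Longrightarrow> g \<noteq> {v, w} \<Longrightarrow> g \<subseteq> A \<or> g \<inter> A = {}"
proof -
  have "finite E" using finite_subset[OF E finite_edges[OF sg]] .
  then have "\<exists>A. v \<in> A \<and> w \<notin> A \<and> (\<forall>g\<in>E. g \<noteq> {v, w} \<longrightarrow> g \<subseteq> A \<or> g \<inter> A = {})"
    using E e
  proof (induction E rule: finite_psubset_induct)
    case (psubset E)
    have "E \<noteq> {}" using psubset.prems(2) by blast
    obtain f l where f: "f \<in> E" "l \<in> f" and leaf: "\<And>h. h \<in> E \<Longrightarrow> l \<in> h \<Longrightarrow> h = f"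
      using genus_0_leaf_edge[OF sg g0 psubset.prems(1) \<open>E \<noteq> {}\<close>] by blast
    obtain p where p: "p \<noteq> l" "f = {l, p}"
      using edge_other_endpoint psubset.prems(1) f by blast
    show ?case
    proof (cases "f = {v, w}")
      case True
      then consider "l = v" | "l = w" using f(2) by blast
      then show ?thesis
      proof cases
        case 1
        then have "g \<inter> {v} = {}" if "g \<in> E" "g \<noteq> {v, w}" for g
          using leaf[OF that(1)] that(2) True by blast
        then show ?thesis using \<open>v \<noteq> w\<close> by (intro exI[of _ "{v}"]) simp
      next
        case 2
        then have "g \<subseteq> - {w}" if "g \<in> E" "g \<noteq> {v, w}" for g
          using leaf[OF that(1)] that(2) True by blast
        then show ?thesis using \<open>v \<noteq> w\<close> by (intro exI[of _ "- {w}"]) simp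
      qed
    next
      case False
      have "E - {f} \<subset> E" "E - {f} \<subseteq> edges \<Delta>" "{v, w} \<in> E - {f}"
        using f psubset.prems False by auto
      then have "\<exists>A. v \<in> A \<and> w \<notin> A \<and> (\<forall>g\<in>E - {f}. g \<noteq> {v, w} \<longrightarrow> g \<subseteq> A \<or> g \<inter> A = {})"
        by (rule psubset.IH)
      then obtain A where A: "v \<in> A" "w \<notin> A" "\<forall>g\<in>E - {f}. g \<noteq> {v, w} \<longrightarrow> g \<subseteq> A \<or> g \<inter> A = {}"
        by blast
      have "l \<notin> \<Union>(E - {f})" using leaf by blast
      moreover have "l \<noteq> v" "l \<noteq> w" using leaf[OF psubset.prems(2)] False by auto
      moreover have "insert {l, p} (E - {f}) = E" using f p by blast
      ultimately show ?thesis using separation_extends_to_leaf_edge[OF A, of l p] by simp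
    qed
  qed
  then show thesis using that by blast
qed

abbreviation supp :: "(nat \<Rightarrow> int) \<Rightarrow> nat set" where
  "supp a \<equiv> {j. a j \<noteq> 0}"

lemma ind_degs: "F \<subseteq> {1..n} \<Longrightarrow> ind F \<in> degs n"
  by (auto simp: degs_def ind_def)

lemma ind_singleton_degs: "i \<in> {1..n} \<Longrightarrow> ind {i} \<in> degs n"
  by (auto simp: degs_def ind_def)

lemma add_ind_degs: "a \<in> degs n \<Longrightarrow> i \<in> {1..n} \<Longrightarrow> a + ind {i} \<in> degs n"
  by (auto simp: degs_def ind_def)

lemma zero_degs: "0 \<in> degs n"
  by (simp add: degs_def)

lemma ind_add_ind: "v \<noteq> w \<Longrightarrow> ind {v} + ind {w} = ind {v, w}"
  by (auto simp: fun_eq_iff ind_def)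

lemma supp_degs: "a \<in> degs n \<Longrightarrow> supp a \<subseteq> {1..n}"
  by (auto simp: degs_def)

lemma supp_ind [simp]: "supp (ind F) = F"
  by (auto simp: ind_def)

lemma supp_add_ind: "0 \<le> a i \<Longrightarrow> supp (a + ind {i}) = insert i (supp a)"
  by (auto simp: ind_def)

lemma monl_trivial: "\<forall>i\<in>set is. b i = 0 \<Longrightarrow> monl mult is b a x = x"
  by (induction "is" arbitrary: a) auto

lemma monl_single_variable:
  "distinct is \<Longrightarrow> \<forall>i\<in>set is. i \<noteq> w \<longrightarrow> b i = 0 \<Longrightarrow> b w = 1 \<Longrightarrow>
   monl mult is b a x = (if w \<in> set is then mult w a x else x)"
  by (induction "is" arbitrary: a x) (auto simp: monl_trivial)

lemma monl_Cons_1: "b i = 1 \<Longrightarrow> monl mult (i # is) b a x = monl mult is b (a + ind {i}) (mult i a x)"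
proof -
  assume "b i = 1"
  moreover have "(\<lambda>j. a j + int 1 * ind {i} j) = a + ind {i}" by (simp add: fun_eq_iff)
  ultimately show ?thesis by (simp only: monl.simps One_nat_def xpow.simps) simp
qed

lemma phi_vertex_edge:
  assumes "v \<noteq> w" and "w \<in> {1..n}"
  shows "phi mult n {v} {v, w} x = mult w (ind {v}) x"
  unfolding phi_def mon_def using assms
  by (subst monl_single_variable[where w = w]) auto

section \<open>Square-free modules\<close>

locale square_free_module =
  fixes scale :: "'k::field \<Rightarrow> 'v::ab_group_add \<Rightarrow> 'v" and n :: nat
    and M :: "(nat \<Rightarrow> int) \<Rightarrow> 'v set" and mult :: "nat \<Rightarrow> (nat \<Rightarrow> int) \<Rightarrow> 'v \<Rightarrow> 'v"
  assumes square_free: "square_free scale n M mult"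
begin

lemma graded: "graded_module scale n M mult"
  using square_free by (simp add: square_free_def)

lemma vector_space_scale: "vector_space scale"
  using graded by (simp add: graded_module_def)

lemma subspace_M: "a \<in> degs n \<Longrightarrow> module.subspace scale (M a)"
  using graded by (simp add: graded_module_def)

lemma zero_in_M:
  assumes "a \<in> degs n"
  shows "0 \<in> M a"
proof -
  interpret vector_space scale by (rule vector_space_scale)
  show ?thesis using subspace_M[OF assms] by (rule subspace_0)
qed

lemma mult_in_M: "a \<in> degs n \<Longrightarrow> i \<in> {1..n} \<Longrightarrow> x \<in> M a \<Longrightarrow> mult i a x \<in> M (a + ind {i})"
  using graded unfolding graded_module_def by blast

lemma mult_scale: "a \<in> degs n \<Longrightarrow> i \<in> {1..n} \<Longrightarrow> x \<in> M a \<Longrightarrow> mult i a (scale r x) = scale r (mult i a x)"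
  using graded unfolding graded_module_def by blast

lemma mult_zero: "a \<in> degs n \<Longrightarrow> i \<in> {1..n} \<Longrightarrow> mult i a 0 = 0"
  using graded zero_in_M[of a] unfolding graded_module_def by (metis add_cancel_right_right)

lemma mult_commute: "a \<in> degs n \<Longrightarrow> i \<in> {1..n} \<Longrightarrow> j \<in> {1..n} \<Longrightarrow> x \<in> M a \<Longrightarrow>
   mult i (a + ind {j}) (mult j a x) = mult j (a + ind {i}) (mult i a x)"
  using graded unfolding graded_module_def by blast

lemma mult_0_in_M: "p \<in> {1..n} \<Longrightarrow> x \<in> M 0 \<Longrightarrow> mult p 0 x \<in> M (ind {p})"
  using mult_in_M[OF zero_degs, of p x] by simp

lemma mult_commute_0: "p \<in> {1..n} \<Longrightarrow> q \<in> {1..n} \<Longrightarrow> x \<in> M 0 \<Longrightarrow>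
   mult q (ind {p}) (mult p 0 x) = mult p (ind {q}) (mult q 0 x)"
  using mult_commute[OF zero_degs, of q p x] by simp

lemma M_eq_0_if_negative:
  assumes "a \<in> degs n" and "a i < 0"
  shows "M a = {0}"
proof -
  have "i \<in> {1..n}" using assms by (auto simp: degs_def)
  with assms square_free show ?thesis unfolding square_free_def by blast
qed

lemma M_nontrivial_if_dim_1:
  assumes "a \<in> degs n" and "vector_space.dim scale (M a) = 1"
  shows "M a \<noteq> {0}"
  using vector_space.dim_1_generator[OF vector_space_scale subspace_M[OF assms(1)] assms(2)] by blast

lemma bij_betw_mult: "a \<in> degs n \<Longrightarrow> \<forall>j. 0 \<le> a j \<Longrightarrow> i \<in> {1..n} \<Longrightarrow> 0 < a i \<Longrightarrow>
   bij_betw (mult i a) (M a) (M (a + ind {i}))"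
  using square_free by (simp add: square_free_def)

lemma monl_eq_0_imp_eq_0:
  "set is \<subseteq> {1..n} \<Longrightarrow> a \<in> degs n \<Longrightarrow> \<forall>j. 0 \<le> a j \<Longrightarrow> \<forall>i. b i \<le> 1 \<Longrightarrow>
   \<forall>i\<in>set is. b i = 1 \<longrightarrow> 0 < a i \<Longrightarrow> x \<in> M a \<Longrightarrow> monl mult is b a x = 0 \<Longrightarrow> x = 0"
proof (induction "is" arbitrary: a x)
  case Nil then show ?case by simp
next
  case (Cons i "is")
  have i: "i \<in> {1..n}" using Cons.prems(1) by simp
  show ?case
  proof (cases "b i = 0")
    case True
    then show ?thesis using Cons.IH[of a x] Cons.prems by simp
  next
    case False
    with Cons.prems(4) have bi: "b i = 1" by (metis le_neq_implies_less less_one)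
    have "monl mult is b (a + ind {i}) (mult i a x) = 0"
      using Cons.prems(7) unfolding monl_Cons_1[of b i, OF bi] .
    moreover have "\<forall>j. 0 \<le> (a + ind {i}) j" "\<forall>j\<in>set is. b j = 1 \<longrightarrow> 0 < (a + ind {i}) j"
      using Cons.prems(3,5) by (auto simp: ind_def add_nonneg_pos)
    moreover have "set is \<subseteq> {1..n}" using Cons.prems(1) by simp
    ultimately have "mult i a x = 0"
      using Cons.IH[OF _ add_ind_degs[OF Cons.prems(2) i] _ Cons.prems(4) _ mult_in_M[OF Cons.prems(2) i Cons.prems(6)]]
      by blast
    moreover have "bij_betw (mult i a) (M a) (M (a + ind {i}))"
      using bij_betw_mult[OF Cons.prems(2,3) i] Cons.prems(5) bi by simp
    ultimately show ?thesis
      using bij_betw_nonzero zero_in_M[OF Cons.prems(2)] mult_zero[OF Cons.prems(2) i] Cons.prems(6) by blast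
  qed
qed

lemma M_eq_0_if_support_not_face:
  assumes support: "support_on scale n M mult \<Delta>"
    and a: "a \<in> degs n" "\<forall>j. 0 \<le> a j" and not_face: "supp a \<notin> \<Delta>"
  shows "M a = {0}"
proof -
  define b where "b i = (if 0 < a i then 1 else 0 :: nat)" for i
  have "i \<notin> {1..n} \<Longrightarrow> b i = 0" for i using a by (auto simp: b_def degs_def)
  moreover have "{i \<in> {1..n}. 0 < b i} = supp a"
    using a by (force simp: b_def degs_def order.order_iff_strict)
  ultimately have "\<forall>a\<in>degs n. \<forall>x\<in>M a. mon mult n b a x = 0"
    using support not_face unfolding support_on_def by auto
  then have "x = 0" if "x \<in> M a" for x
    using a that by (intro monl_eq_0_imp_eq_0[of "[1..<Suc n]" a b x]) (auto simp: b_def mon_def)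
  then show ?thesis using zero_in_M[OF a(1)] by blast
qed

lemma mult_eq_0_if_eq_0_on_support:
  "a \<in> degs n \<Longrightarrow> \<forall>j. 0 \<le> a j \<Longrightarrow> i \<in> {1..n} \<Longrightarrow> a i = 0 \<Longrightarrow>
   \<forall>y\<in>M (ind (supp a)). mult i (ind (supp a)) y = 0 \<Longrightarrow> x \<in> M a \<Longrightarrow> mult i a x = 0"
proof (induction "\<Sum>j\<in>{1..n}. nat (a j)" arbitrary: a x rule: less_induct)
  case less
  show ?case
  proof (cases "\<forall>j. a j \<le> 1")
    case True
    have "a j = ind (supp a) j" for j
      using True[rule_format, of j] less.prems(2)[rule_format, of j] by (auto simp: ind_def)
    then have "a = ind (supp a)" ..
    then show ?thesis using less.prems(5,6) by metis
  next
    case False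
    then obtain j where j: "a j > 1" by (auto simp: not_le)
    then have jn: "j \<in> {1..n}" using less.prems(1) by (auto simp: degs_def)
    define a' where "a' = a - ind {j}"
    have a': "a' \<in> degs n" "\<forall>k. 0 \<le> a' k" "supp a' = supp a" "a' i = 0" "0 < a' j" "a' + ind {j} = a"
      using less.prems(1,2,4) j jn by (auto simp: a'_def degs_def ind_def)
    have "(\<Sum>k\<in>{1..n}. nat (a' k)) < (\<Sum>k\<in>{1..n}. nat (a k))"
      using jn j by (intro sum_strict_mono_ex1) (auto simp: a'_def ind_def)
    note IH = less.hyps[OF this a'(1,2) less.prems(3) a'(4)]
    have "x \<in> mult j a' ` M a'"
      using bij_betw_imp_surj_on[OF bij_betw_mult[OF a'(1,2) jn a'(5)]] a'(6) less.prems(6) by simp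
    then obtain y where y: "y \<in> M a'" "x = mult j a' y" by blast
    have "mult i a x = mult j (a' + ind {i}) (mult i a' y)"
      using mult_commute[OF a'(1) less.prems(3) jn y(1)] y(2) a'(6) by simp
    also have "\<dots> = 0"
      using IH y(1) less.prems(5) a'(3) mult_zero[OF add_ind_degs[OF a'(1) less.prems(3)] jn] by simp
    finally show ?thesis .
  qed
qed

lemma graded_submodule_restrict_supports:
  fixes P :: "nat set \<Rightarrow> bool"
  assumes closed: "\<And>a i x. a \<in> degs n \<Longrightarrow> \<forall>j. 0 \<le> a j \<Longrightarrow> i \<in> {1..n} \<Longrightarrow> i \<notin> supp a \<Longrightarrow>
      P (supp a) \<Longrightarrow> \<not> P (insert i (supp a)) \<Longrightarrow> x \<in> M a \<Longrightarrow> mult i a x = 0"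
  shows "graded_submodule scale n M mult (\<lambda>a. if P (supp a) then M a else {0})"
  unfolding graded_submodule_def
proof (intro conjI ballI)
  interpret vector_space scale by (rule vector_space_scale)
  fix a assume a: "a \<in> degs n"
  show "subspace (if P (supp a) then M a else {0})" using subspace_M[OF a] by simp
  show "(if P (supp a) then M a else {0}) \<subseteq> M a" using zero_in_M[OF a] by auto
next
  fix a i x assume a: "a \<in> degs n" and i: "i \<in> {1..n}" and x: "x \<in> (if P (supp a) then M a else {0})"
  have zero: "0 \<in> (if P (supp (a + ind {i})) then M (a + ind {i}) else {0})"
    using zero_in_M[OF add_ind_degs[OF a i]] by simp
  show "mult i a x \<in> (if P (supp (a + ind {i})) then M (a + ind {i}) else {0})"
  proof (cases "P (supp a) \<and> (\<forall>j. 0 \<le> a j)")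
    case False
    then have "x = 0" using x M_eq_0_if_negative[OF a] by (auto split: if_splits simp: not_le)
    then show ?thesis using zero mult_zero[OF a i] by simp
  next
    case True
    then have "x \<in> M a" and supp: "supp (a + ind {i}) = insert i (supp a)"
      using x supp_add_ind[of a i] by auto
    then show ?thesis
      using closed[OF a _ i _ _ _ \<open>x \<in> M a\<close>] True zero mult_in_M[OF a i \<open>x \<in> M a\<close>]
      by (cases "i \<in> supp a") (auto simp: insert_absorb)
  qed
qed

lemma indecomposable_support_property_constant:
  fixes P :: "nat set \<Rightarrow> bool"
  assumes indecomposable: "indecomposable scale n M mult"
    and separated: "\<And>a i x. a \<in> degs n \<Longrightarrow> \<forall>j. 0 \<le> a j \<Longrightarrow> i \<in> {1..n} \<Longrightarrow> i \<notin> supp a \<Longrightarrow>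
      P (supp a) \<noteq> P (insert i (supp a)) \<Longrightarrow> x \<in> M a \<Longrightarrow> mult i a x = 0"
    and a1: "a1 \<in> degs n" "M a1 \<noteq> {0}" and a2: "a2 \<in> degs n" "M a2 \<noteq> {0}"
  shows "P (supp a1) = P (supp a2)"
proof (rule ccontr)
  define N1 where "N1 = (\<lambda>a. if P (supp a) then M a else {0})"
  define N2 where "N2 = (\<lambda>a. if \<not> P (supp a) then M a else {0})"
  assume "P (supp a1) \<noteq> P (supp a2)"
  then have "\<exists>a\<in>degs n. N1 a \<noteq> {0}" "\<exists>a\<in>degs n. N2 a \<noteq> {0}"
    using a1 a2 by (auto simp: N1_def N2_def)
  moreover have "graded_submodule scale n M mult N1" "graded_submodule scale n M mult N2"
    unfolding N1_def N2_def using separated by (auto intro!: graded_submodule_restrict_supports)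
  moreover have "N1 a \<inter> N2 a = {0} \<and> M a = {x + y | x y. x \<in> N1 a \<and> y \<in> N2 a}" if "a \<in> degs n" for a
    using zero_in_M[OF that] by (auto simp: N1_def N2_def)
  ultimately show False using indecomposable unfolding indecomposable_def by blast
qed

end

section \<open>Square-free modules of rank one on a forest\<close>

locale tree_module = square_free_module scale n M mult
  for scale :: "'k::field \<Rightarrow> 'v::ab_group_add \<Rightarrow> 'v" and n M mult +
  fixes \<Delta> :: "nat set set"
  assumes graph: "simplicial_graph n \<Delta>"
    and genus_0: "genus TYPE('k) n \<Delta> = 0"
    and indecomposable: "indecomposable scale n M mult"
    and support: "support_on scale n M mult \<Delta>"
    and dim_edge: "\<And>e. e \<in> edges \<Delta> \<Longrightarrow> vector_space.dim scale (M (ind e)) = 1"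
    and dim_vertex: "\<And>v. v \<in> {1..n} \<Longrightarrow> vector_space.dim scale (M (ind {v})) = 1"
begin

definition live_link :: "nat \<Rightarrow> nat \<Rightarrow> bool" where
  "live_link v w \<longleftrightarrow> (\<exists>x\<in>M (ind {v}). mult w (ind {v}) x \<noteq> 0)"

definition link_step :: "(nat set \<times> nat set) set" where
  "link_step = {({v}, {v, w}) | v w. {v, w} \<in> edges \<Delta> \<and> live_link v w}"

lemma edge_vertices:
  assumes "{v, w} \<in> edges \<Delta>"
  shows "v \<in> {1..n}" "w \<in> {1..n}" "v \<noteq> w"
proof -
  show "v \<in> {1..n}" "w \<in> {1..n}" using edges_subset[OF graph assms] by auto
  show "v \<noteq> w" using assms by (auto simp: edges_def)
qed

lemma M_edge_nontrivial: "e \<in> edges \<Delta> \<Longrightarrow> M (ind e) \<noteq> {0}"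
  using M_nontrivial_if_dim_1[OF ind_degs[OF edges_subset[OF graph]] dim_edge] .

lemma M_vertex_nontrivial: "v \<in> {1..n} \<Longrightarrow> M (ind {v}) \<noteq> {0}"
  using M_nontrivial_if_dim_1[OF ind_singleton_degs dim_vertex] .

lemma bij_betw_mult_if_live_link:
  assumes e: "{v, w} \<in> edges \<Delta>" and live: "live_link v w"
  shows "bij_betw (mult w (ind {v})) (M (ind {v})) (M (ind {v, w}))"
proof -
  note vw = edge_vertices[OF e]
  have dv: "ind {v} \<in> degs n" and de: "ind {v, w} \<in> degs n"
    using vw by (auto intro: ind_degs)
  show ?thesis
  proof (rule vector_space.bij_betw_if_dim_1[OF vector_space_scale])
    show "module.subspace scale (M (ind {v}))" "module.subspace scale (M (ind {v, w}))"
      using subspace_M dv de by blast+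
    show "vector_space.dim scale (M (ind {v})) = 1" "vector_space.dim scale (M (ind {v, w})) = 1"
      using dim_vertex dim_edge vw e by blast+
    show "mult w (ind {v}) ` M (ind {v}) \<subseteq> M (ind {v, w})"
      using mult_in_M[OF dv vw(2)] ind_add_ind[OF vw(3)] by auto
    show "mult w (ind {v}) (scale r x) = scale r (mult w (ind {v}) x)" if "x \<in> M (ind {v})" for r x
      using mult_scale[OF dv vw(2) that] .
    show "\<exists>x\<in>M (ind {v}). mult w (ind {v}) x \<noteq> 0" using live by (simp add: live_link_def)
  qed
qed

end

locale vanishing_link = tree_module scale n M mult \<Delta>
  for scale :: "'k::field \<Rightarrow> 'v::ab_group_add \<Rightarrow> 'v" and n M mult \<Delta> +
  fixes v w :: nat
  assumes edge: "{v, w} \<in> edges \<Delta>"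
    and dead: "\<not> live_link v w"
begin

definition component :: "nat set set" where
  "component = {G. ({v, w}, G) \<in> (link_step \<union> link_step\<inverse>)\<^sup>*}"

lemma component_link_step: "(G, H) \<in> link_step \<Longrightarrow> G \<in> component \<longleftrightarrow> H \<in> component"
  unfolding component_def by (auto intro: rtrancl_into_rtrancl)

lemma component_induct [consumes 1, case_names base forward backward]:
  assumes "G \<in> component" and "P {v, w}"
    and "\<And>u u'. P {u} \<Longrightarrow> {u, u'} \<in> edges \<Delta> \<Longrightarrow> live_link u u' \<Longrightarrow> P {u, u'}"
    and "\<And>u u'. P {u, u'} \<Longrightarrow> {u, u'} \<in> edges \<Delta> \<Longrightarrow> live_link u u' \<Longrightarrow> P {u}"
  shows "P G"
proof -
  have "({v, w}, G) \<in> (link_step \<union> link_step\<inverse>)\<^sup>*" using assms(1) by (simp add: component_def)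
  then show ?thesis
    by (induction rule: rtrancl_induct) (use assms(2-4) in \<open>auto simp: link_step_def\<close>)
qed

lemma component_separated:
  assumes A: "v \<in> A" "w \<notin> A" "\<And>g. g \<in> edges \<Delta> \<Longrightarrow> g \<noteq> {v, w} \<Longrightarrow> g \<subseteq> A \<or> g \<inter> A = {}"
    and "G \<in> component"
  shows "(\<exists>u\<in>{1..n}. G = {u} \<and> u \<notin> A) \<or> (G \<in> edges \<Delta> \<and> (G = {v, w} \<or> G \<inter> A = {}))"
  using \<open>G \<in> component\<close>
proof (induction rule: component_induct)
  case base
  then show ?case using edge by simp
next
  case (forward u u')
  then have "u \<notin> A" using singleton_not_edge by auto
  with forward.hyps(1) show ?case using A(3)[of "{u, u'}"] by auto
next
  case (backward u u')
  have "u \<in> {1..n}" using edge_vertices[OF backward.hyps(1)] by simp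
  moreover have "u \<notin> A"
  proof (cases "{u, u'} = {v, w}")
    case True
    then have "u = w" using dead backward.hyps(2) edge_vertices[OF edge]
      by (auto simp: doubleton_eq_iff)
    then show ?thesis using A(2) by simp
  next
    case False
    then show ?thesis using backward.IH by auto
  qed
  ultimately show ?case by blast
qed

lemma edge_separates:
  obtains A where "v \<in> A" "w \<notin> A" "\<And>g. g \<in> edges \<Delta> \<Longrightarrow> g \<noteq> {v, w} \<Longrightarrow> g \<subseteq> A \<or> g \<inter> A = {}"
  using genus_0_edge_separates[OF graph genus_0 order_refl edge edge_vertices(3)[OF edge]] by blast

lemma component_faces:
  assumes "G \<in> component"
  shows "(\<exists>u\<in>{1..n}. G = {u}) \<or> G \<in> edges \<Delta>"
proof -
  obtain A where A: "v \<in> A" "w \<notin> A" "\<And>g. g \<in> edges \<Delta> \<Longrightarrow> g \<noteq> {v, w} \<Longrightarrow> g \<subseteq> A \<or> g \<inter> A = {}"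
    using edge_separates by blast
  show ?thesis using component_separated[OF A assms] by blast
qed

lemma singleton_v_notin_component: "{v} \<notin> component"
proof
  obtain A where A: "v \<in> A" "w \<notin> A" "\<And>g. g \<in> edges \<Delta> \<Longrightarrow> g \<noteq> {v, w} \<Longrightarrow> g \<subseteq> A \<or> g \<inter> A = {}"
    using edge_separates by blast
  assume "{v} \<in> component"
  then show False using component_separated[OF A] A(1) singleton_not_edge by blast
qed

lemma component_annihilates_M0:
  assumes "G \<in> component" and x: "x \<in> M 0"
  shows "(\<forall>u. G = {u} \<longrightarrow> mult u 0 x = 0) \<and>
    (\<forall>p q. G = {p, q} \<longrightarrow> p \<noteq> q \<longrightarrow> mult q (ind {p}) (mult p 0 x) = 0)"
  using \<open>G \<in> component\<close>
proof (induction rule: component_induct)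
  case base
  have vw: "mult w (ind {v}) (mult v 0 x) = 0"
    using dead mult_0_in_M[OF _ x] edge_vertices[OF edge] by (auto simp: live_link_def)
  moreover have "mult v (ind {w}) (mult w 0 x) = 0"
    using vw mult_commute_0[OF edge_vertices(1,2)[OF edge] x] by simp
  ultimately show ?case
    using edge_vertices(3)[OF edge] by (metis doubleton_eq_iff singleton_insert_inj_eq)
next
  case (forward u u')
  note uu' = edge_vertices[OF forward.hyps(1)]
  have "ind {u} \<in> degs n" using ind_singleton_degs uu' by simp
  moreover have "mult u 0 x = 0" using forward.IH by blast
  ultimately have "mult u' (ind {u}) (mult u 0 x) = 0" "mult u (ind {u'}) (mult u' 0 x) = 0"
    using mult_zero[of "ind {u}" u'] mult_commute_0[OF uu'(1,2) x] uu' by simp_all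
  then show ?case using uu'(3) by (metis doubleton_eq_iff singleton_insert_inj_eq)
next
  case (backward u u')
  note uu' = edge_vertices[OF backward.hyps(1)]
  have "mult u' (ind {u}) (mult u 0 x) = 0" using backward.IH uu'(3) by blast
  moreover have "mult u 0 x \<in> M (ind {u})" using mult_0_in_M[OF _ x] uu' by simp
  moreover have "0 \<in> M (ind {u})" "mult u' (ind {u}) 0 = 0"
    using zero_in_M mult_zero ind_singleton_degs uu' by simp_all
  ultimately have "mult u 0 x = 0"
    using bij_betw_nonzero[OF bij_betw_mult_if_live_link[OF backward.hyps(1,2)]] by blast
  then show ?case by (metis doubleton_eq_iff singleton_insert_inj_eq)
qed

lemma mult_eq_0_across_component_boundary:
  assumes a: "a \<in> degs n" "\<forall>j. 0 \<le> a j" and i: "i \<in> {1..n}" "i \<notin> supp a"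
    and differ: "(supp a \<in> component) \<noteq> (insert i (supp a) \<in> component)" and x: "x \<in> M a"
  shows "mult i a x = 0"
proof (cases "insert i (supp a) \<in> \<Delta>")
  case False
  moreover have "supp (a + ind {i}) = insert i (supp a)"
    using a(2) by (intro supp_add_ind) blast
  ultimately have "M (a + ind {i}) = {0}"
    using M_eq_0_if_support_not_face[OF support add_ind_degs[OF a(1) i(1)]] a(2)
    by (simp add: ind_def)
  then show ?thesis using mult_in_M[OF a(1) i(1) x] by simp
next
  case True
  have "finite (supp a)" using finite_subset[OF supp_degs[OF a(1)]] by simp
  then consider "supp a = {}" | u where "supp a = {u}" "{u, i} \<in> edges \<Delta>"
    using face_insert_cases[OF graph True i(2)] by blast
  then show ?thesis
  proof cases
    case 1
    then have "a = 0" by auto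
    have "{} \<notin> component" using component_faces[of "{}"] by (auto simp: edges_def)
    then have "{i} \<in> component" using differ 1 by simp
    then show ?thesis using component_annihilates_M0 x \<open>a = 0\<close> by blast
  next
    case (2 u)
    have "\<not> live_link u i"
    proof
      assume "live_link u i"
      then have "({u}, {u, i}) \<in> link_step" using 2(2) by (auto simp: link_step_def)
      then show False using differ 2(1) component_link_step by (simp add: insert_commute)
    qed
    then have "\<forall>y\<in>M (ind (supp a)). mult i (ind (supp a)) y = 0"
      using 2(1) by (simp add: live_link_def)
    then show ?thesis
      using mult_eq_0_if_eq_0_on_support[OF a i(1) _ _ x] i(2) by simp
  qed
qed

lemma vanishing_link_absurd: False
proof -
  have "ind {v, w} \<in> degs n" "ind {v} \<in> degs n"
    using edges_subset[OF graph edge] by (auto intro: ind_degs)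
  moreover have "M (ind {v, w}) \<noteq> {0}" "M (ind {v}) \<noteq> {0}"
    using M_edge_nontrivial[OF edge] M_vertex_nontrivial edge_vertices(1)[OF edge] by auto
  ultimately have "(supp (ind {v, w}) \<in> component) = (supp (ind {v}) \<in> component)"
    using indecomposable_support_property_constant[OF indecomposable, where P = "\<lambda>S. S \<in> component"]
      mult_eq_0_across_component_boundary by blast
  then show False using singleton_v_notin_component by (simp add: component_def)
qed

end

context tree_module
begin

lemma live_link_edge:
  assumes "{v, w} \<in> edges \<Delta>"
  shows "live_link v w"
proof (rule ccontr)
  assume "\<not> live_link v w"
  with assms interpret vanishing_link scale n M mult \<Delta> v w
    by unfold_locales
  show False by (rule vanishing_link_absurd)
qed

lemma bij_betw_mult_edge:
  "{v, w} \<in> edges \<Delta> \<Longrightarrow> bij_betw (mult w (ind {v})) (M (ind {v})) (M (ind {v, w}))"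
  using bij_betw_mult_if_live_link live_link_edge by blast

lemma mult_edge_nonzero:
  assumes "{v, w} \<in> edges \<Delta>" and "x \<in> M (ind {v})" and "x \<noteq> 0"
  shows "mult w (ind {v}) x \<noteq> 0"
proof -
  note vw = edge_vertices[OF assms(1)]
  show ?thesis
    using bij_betw_nonzero[OF bij_betw_mult_edge[OF assms(1)] zero_in_M mult_zero assms(2,3)]
      ind_singleton_degs vw by simp
qed

lemma mult_edge_in_M:
  assumes "{v, w} \<in> edges \<Delta>" and "x \<in> M (ind {v})"
  shows "mult w (ind {v}) x \<in> M (ind {v, w})"
  using mult_in_M[OF ind_singleton_degs _ assms(2)] ind_add_ind edge_vertices[OF assms(1)] by metis

lemma matching_generator_across_edge:
  assumes e: "{l, p} \<in> edges \<Delta>" and y: "y \<in> M (ind {p})" "y \<noteq> 0"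
  obtains x where "x \<in> M (ind {l})" "x \<noteq> 0" "mult p (ind {l}) x = mult l (ind {p}) y"
proof -
  have e': "{p, l} \<in> edges \<Delta>" using e by (simp add: insert_commute)
  have "mult l (ind {p}) y \<in> M (ind {l, p})"
    using mult_edge_in_M[OF e' y(1)] by (simp add: insert_commute)
  then obtain x where x: "x \<in> M (ind {l})" "mult p (ind {l}) x = mult l (ind {p}) y"
    using bij_betw_imp_surj_on[OF bij_betw_mult_edge[OF e]] by (metis imageE)
  moreover have "x \<noteq> 0"
    using x(2) mult_edge_nonzero[OF e' y] mult_zero ind_singleton_degs edge_vertices[OF e] by force
  ultimately show thesis using that by blast
qed

lemma compatible_vertex_generators:
  assumes "E \<subseteq> edges \<Delta>"
  shows "\<exists>b. (\<forall>u\<in>{1..n}. b u \<in> M (ind {u}) \<and> b u \<noteq> 0) \<and>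
    (\<forall>p q. {p, q} \<in> E \<longrightarrow> mult q (ind {p}) (b p) = mult p (ind {q}) (b q))"
proof -
  have "finite E" using finite_subset[OF assms finite_edges[OF graph]] .
  then show ?thesis
    using assms
  proof (induction E rule: finite_psubset_induct)
    case (psubset E)
    show ?case
    proof (cases "E = {}")
      case True
      have "\<exists>x\<in>M (ind {u}). x \<noteq> 0" if "u \<in> {1..n}" for u
        using M_vertex_nontrivial[OF that] zero_in_M[OF ind_singleton_degs[OF that]] by blast
      then obtain b where "\<forall>u\<in>{1..n}. b u \<in> M (ind {u}) \<and> b u \<noteq> 0" by metis
      with True show ?thesis by auto
    next
      case False
      obtain f l where f: "f \<in> E" "l \<in> f" and leaf: "\<And>h. h \<in> E \<Longrightarrow> l \<in> h \<Longrightarrow> h = f"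
        using genus_0_leaf_edge[OF graph genus_0 psubset.prems False] by blast
      obtain p where p: "p \<noteq> l" "f = {l, p}"
        using edge_other_endpoint psubset.prems f by blast
      have "E - {f} \<subset> E" "E - {f} \<subseteq> edges \<Delta>" using f psubset.prems by auto
      then have "\<exists>b. (\<forall>u\<in>{1..n}. b u \<in> M (ind {u}) \<and> b u \<noteq> 0) \<and>
          (\<forall>p q. {p, q} \<in> E - {f} \<longrightarrow> mult q (ind {p}) (b p) = mult p (ind {q}) (b q))"
        by (rule psubset.IH)
      then obtain b where b: "\<forall>u\<in>{1..n}. b u \<in> M (ind {u}) \<and> b u \<noteq> 0"
        and compatible: "\<forall>p q. {p, q} \<in> E - {f} \<longrightarrow> mult q (ind {p}) (b p) = mult p (ind {q}) (b q)"
        by blast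
      have e: "{l, p} \<in> edges \<Delta>" using f p psubset.prems by auto
      moreover have "b p \<in> M (ind {p})" "b p \<noteq> 0" using b edge_vertices[OF e] by auto
      \<comment> \<open>the leaf \<open>l\<close> lies on no other edge of \<open>E\<close>, so \<open>b l\<close> may be chosen to match \<open>b p\<close> along \<open>f\<close>\<close>
      ultimately obtain x where x: "x \<in> M (ind {l})" "x \<noteq> 0"
        "mult p (ind {l}) x = mult l (ind {p}) (b p)"
        by (rule matching_generator_across_edge)
      show ?thesis
      proof (intro exI[of _ "b(l := x)"] conjI ballI allI impI)
        fix u assume "u \<in> {1..n}"
        then show "(b(l := x)) u \<in> M (ind {u})" "(b(l := x)) u \<noteq> 0"
          using b x(1,2) by auto
      next
        fix p' q' assume g: "{p', q'} \<in> E"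
        show "mult q' (ind {p'}) ((b(l := x)) p') = mult p' (ind {q'}) ((b(l := x)) q')"
        proof (cases "{p', q'} = f")
          case True
          then have "(p', q') = (l, p) \<or> (p', q') = (p, l)" using p by (auto simp: doubleton_eq_iff)
          then show ?thesis using x(3) p(1) by auto
        next
          case False
          then have "l \<noteq> p'" "l \<noteq> q'" using leaf[OF g] by auto
          then show ?thesis using compatible g False by auto
        qed
      qed
    qed
  qed
qed

lemma vertex_edge_normal_form:
  "\<exists>bv be. (\<forall>v\<in>{1..n}. bv v \<in> M (ind {v}) \<and> bv v \<noteq> 0) \<and>
     (\<forall>e\<in>edges \<Delta>. be e \<in> M (ind e) \<and> be e \<noteq> 0) \<and>
     (\<forall>e\<in>edges \<Delta>. \<forall>v\<in>e. phi mult n {v} e (bv v) = be e)"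
proof -
  obtain b where b: "\<forall>u\<in>{1..n}. b u \<in> M (ind {u}) \<and> b u \<noteq> 0"
    and compatible: "\<And>p q. {p, q} \<in> edges \<Delta> \<Longrightarrow> mult q (ind {p}) (b p) = mult p (ind {q}) (b q)"
    using compatible_vertex_generators[OF order_refl] by blast
  define be where "be e = mult (Max e) (ind {Min e}) (b (Min e))" for e
  have be: "be {v, w} = mult w (ind {v}) (b v)" if "{v, w} \<in> edges \<Delta>" for v w
    using compatible[OF that] edge_vertices(3)[OF that]
    by (cases "v < w") (auto simp: be_def insert_commute min_def max_def)
  have "be e \<in> M (ind e) \<and> be e \<noteq> 0" if e: "e \<in> edges \<Delta>" for e
  proof -
    obtain p q where pq: "e = {p, q}" using edge_ordered e by blast
    with e have pq_edge: "{p, q} \<in> edges \<Delta>" by simp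
    have "b p \<in> M (ind {p})" "b p \<noteq> 0" using b edge_vertices(1)[OF pq_edge] by auto
    then show ?thesis
      using be[OF pq_edge] mult_edge_in_M[OF pq_edge] mult_edge_nonzero[OF pq_edge] pq by simp
  qed
  moreover have "phi mult n {v} e (b v) = be e" if e: "e \<in> edges \<Delta>" and v: "v \<in> e" for e v
  proof -
    obtain w where w: "w \<noteq> v" "e = {v, w}" using edge_other_endpoint[OF e v] by blast
    with e have "{v, w} \<in> edges \<Delta>" by simp
    with w show ?thesis using phi_vertex_edge[of v w n mult "b v"] be edge_vertices(2) by simp
  qed
  ultimately show ?thesis using b by blast
qed

end

theorem mainTheorem7:
  fixes scale :: "'k::field \<Rightarrow> 'v::ab_group_add \<Rightarrow> 'v"
    and n :: nat and \<Delta> :: "nat set set"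
    and M :: "(nat \<Rightarrow> int) \<Rightarrow> 'v set"
    and mult :: "nat \<Rightarrow> (nat \<Rightarrow> int) \<Rightarrow> 'v \<Rightarrow> 'v"
  assumes "simplicial_graph n \<Delta>"
    and "connected_graph n \<Delta>"
    and "genus TYPE('k) n \<Delta> = 0"
    and "square_free scale n M mult"
    and "indecomposable scale n M mult"
    and "support_on scale n M mult \<Delta>"
    and "\<forall>F\<in>edges \<Delta>. vector_space.dim scale (M (ind F)) = 1"
    and "\<forall>i\<in>{1..n}. int (vector_space.dim scale (M (ind {i}))) - 1 = 0"
  shows "\<exists>bv :: nat \<Rightarrow> 'v. \<exists>be :: nat set \<Rightarrow> 'v.
           (\<forall>v\<in>{1..n}. bv v \<in> M (ind {v}) \<and> bv v \<noteq> 0) \<and>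
           (\<forall>e\<in>edges \<Delta>. be e \<in> M (ind e) \<and> be e \<noteq> 0) \<and>
           (\<forall>e\<in>edges \<Delta>. \<forall>v\<in>e. phi mult n {v} e (bv v) = be e)"
proof -
  interpret tree_module scale n M mult \<Delta>
    by unfold_locales (use assms in auto)
  show ?thesis by (rule vertex_edge_normal_form)
qed

end
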